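(* Let $\mathbb{K}$ be a field and $f_1,\dots,f_t\in\mathbb{K}[x,y]$ ($t\ge2$) polynomials of $y$-degree at most $d_y\ge1$, such that the coefficient of $y^{d_y}$ in $f_t$ equals $1$. Let $I=\langle f_1,\dots,f_t\rangle$. Then every $f\in I$ with $\deg_y(f)<2d_y$ can be written as $f=w_1f_1+\cdots+w_tf_t$ with all $w_i\in\mathbb{K}[x,y]$ of $y$-degree less than $d_y$. *)

theory Defs
  imports "HOL-Computational_Algebra.Polynomial"
begin

text \<open>Bivariate polynomials K[x,y] are represented as K[x][y], i.e. the type
  'a poly poly: a polynomial in y whose coefficients are polynomials in x.
  Then the y-degree is degree, and the coefficient of y^k is coeff _ k.\<close>

definition in_ideal_gen :: "nat \<Rightarrow> (nat \<Rightarrow> 'a::comm_ring_1) \<Rightarrow> 'a \<Rightarrow> bool" where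
  "in_ideal_gen t fs g \<longleftrightarrow> (\<exists>c. g = (\<Sum>i=1..t. c i * fs i))"

end

theory Submission
  imports Defs
begin

text \<open>Write \<open>f = \<Sum> c\<^sub>i f\<^sub>i\<close>, divide each \<open>c\<^sub>i\<close> with \<open>i < t\<close> by the monic \<open>f\<^sub>t\<close> and move
  all quotients into the cofactor \<open>W\<close> of \<open>f\<^sub>t\<close>. The remainders have \<open>y\<close>-degree below \<open>d\<^sub>y\<close>, so
  \<open>W f\<^sub>t\<close> is \<open>f\<close> minus a polynomial of degree below \<open>2 d\<^sub>y\<close>. As \<open>f\<^sub>t\<close> is monic,
  \<open>deg (W f\<^sub>t) = deg W + d\<^sub>y\<close>, whence \<open>deg W < d\<^sub>y\<close>.\<close>

lemma monic_division:
  fixes p g :: "'a::comm_ring_1 poly"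
  assumes "lead_coeff g = 1" and "0 < degree g"
  obtains q r where "p = g * q + r" and "degree r < degree g"
proof -
  have "g \<noteq> 0" using assms(2) by auto
  obtain q r where qr: "pseudo_divmod p g = (q, r)" by fastforce
  from pseudo_divmod[OF \<open>g \<noteq> 0\<close> qr] assms show ?thesis
    by (intro that[of q r]) auto
qed

lemma degree_mult_monic:
  fixes p g :: "'a::comm_ring_1 poly"
  assumes "lead_coeff g = 1" and "p \<noteq> 0"
  shows "degree (p * g) = degree p + degree g"
  by (rule order_antisym[OF degree_mult_le le_degree]) (simp add: coeff_mult_degree_sum assms)

lemma reduce_cofactors_mod_monic:
  fixes g :: "'a::comm_ring_1 poly"
  assumes "lead_coeff g = 1" and "0 < degree g"
  obtains r W where "(\<Sum>i\<in>A. c i * h i) + c0 * g = (\<Sum>i\<in>A. r i * h i) + W * g"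
    and "\<And>i. degree (r i) < degree g"
proof -
  have "\<forall>i. \<exists>q r. c i = g * q + r \<and> degree r < degree g"
    using monic_division[OF assms] by metis
  then obtain q r where qr: "\<And>i. c i = g * q i + r i" "\<And>i. degree (r i) < degree g"
    by metis
  have "(\<Sum>i\<in>A. c i * h i) + c0 * g
      = (\<Sum>i\<in>A. r i * h i) + (c0 + (\<Sum>i\<in>A. q i * h i)) * g"
    by (simp add: qr(1) algebra_simps sum.distrib sum_distrib_left sum_distrib_right)
  then show ?thesis using qr(2) by (rule that)
qed

lemma degree_cofactor_of_monic_less:
  fixes g :: "'a::comm_ring_1 poly"
  assumes "lead_coeff g = 1" and "0 < k"
    and "degree (R + W * g) < degree g + k" and "degree R < degree g + k"
  shows "degree W < k"
proof (cases "W = 0")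
  case False
  have "W * g = (R + W * g) - R" by simp
  then have "degree (W * g) < degree g + k"
    using assms(3,4) degree_diff_le_max[of "R + W * g" R] by simp
  with degree_mult_monic[OF assms(1) False] show ?thesis by simp
qed (use assms(2) in simp)

lemma bounded_cofactors_mod_monic:
  fixes g :: "'a::comm_ring_1 poly"
  assumes "lead_coeff g = 1" and "0 < degree g"
    and "\<forall>i\<in>A. degree (h i) \<le> degree g"
    and "degree ((\<Sum>i\<in>A. c i * h i) + c0 * g) < 2 * degree g"
  obtains r W where "(\<Sum>i\<in>A. c i * h i) + c0 * g = (\<Sum>i\<in>A. r i * h i) + W * g"
    and "\<And>i. degree (r i) < degree g" and "degree W < degree g"
proof -
  obtain r W where eq: "(\<Sum>i\<in>A. c i * h i) + c0 * g = (\<Sum>i\<in>A. r i * h i) + W * g"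
    and deg_r: "\<And>i. degree (r i) < degree g"
    using reduce_cofactors_mod_monic[OF assms(1,2)] by blast
  have "degree (r i * h i) < degree g + degree g" if "i \<in> A" for i
    using degree_mult_le[of "r i" "h i"] deg_r[of i] assms(3) that by fastforce
  then have "degree (\<Sum>i\<in>A. r i * h i) < degree g + degree g"
    using assms(2) by (intro degree_sum_less) auto
  moreover have "degree ((\<Sum>i\<in>A. r i * h i) + W * g) < degree g + degree g"
    using assms(4) eq by simp
  ultimately have "degree W < degree g"
    using degree_cofactor_of_monic_less[OF assms(1,2)] by blast
  with eq deg_r show ?thesis by (rule that)
qed

theorem mainTheorem5:
  fixes fs :: "nat \<Rightarrow> 'a::field poly poly"
    and t dy :: nat
    and f :: "'a poly poly"
  assumes "t \<ge> 2" and "dy \<ge> 1"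
    and "\<forall>i\<in>{1..t}. degree (fs i) \<le> dy"
    and "coeff (fs t) dy = 1"
    and "in_ideal_gen t fs f"
    and "degree f < 2 * dy"
  shows "\<exists>w. f = (\<Sum>i=1..t. w i * fs i) \<and> (\<forall>i\<in>{1..t}. degree (w i) < dy)"
proof -
  have deg_ft: "degree (fs t) = dy"
    using assms(1,3,4) by (intro antisym le_degree) auto
  have monic: "lead_coeff (fs t) = 1" and pos: "0 < degree (fs t)"
    using deg_ft assms(2,4) by auto
  have split: "{1..t} = insert t {1..<t}" using assms(1) by auto
  obtain c where "f = (\<Sum>i=1..t. c i * fs i)"
    using assms(5) unfolding in_ideal_gen_def by blast
  then have f: "f = (\<Sum>i=1..<t. c i * fs i) + c t * fs t"
    unfolding split by (simp add: add.commute)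
  obtain r W where "f = (\<Sum>i=1..<t. r i * fs i) + W * fs t"
    and "\<And>i. degree (r i) < dy" and "degree W < dy"
    using bounded_cofactors_mod_monic[OF monic pos, of "{1..<t}" fs c "c t"]
      assms(3,6) deg_ft f by auto
  moreover have "(\<Sum>i=1..t. (r(t := W)) i * fs i) = W * fs t + (\<Sum>i=1..<t. r i * fs i)"
    unfolding split by (auto intro: sum.cong)
  ultimately show ?thesis
    by (intro exI[of _ "r(t := W)"]) (simp add: add.commute)
qed

end
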